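(* Let $q\ge 2$ be a prime power and $\xi\in\mathbb{F}_q\setminus\{0\}$. The set $$B=\bigcup_{c\in\mathbb{F}_q}N_{\Gamma_q}[(q,0,c)_1]\ \cup\ N_{\Gamma_q}[(q,q,0)_1]\ \cup\ \Big(\bigcap_{c\in\mathbb{F}_q}N^2_{\Gamma_q}[(q,0,c)_1]\cap N^2_{\Gamma_q}[(q,q,0)_1]\Big)\ \cup\ N^2_{\Gamma_q}[(q,q,\xi)_1]$$ is a perfect dominating set of $\Gamma_q$, and $|B|=2(q^2+3q+1)$.
   Context: Let $q\ge 2$ be a prime power and $\mathbb{F}_q$ the field with $q$ elements; in the vertex labels below the symbol $q$ is also used as an extra formal symbol not belonging to $\mathbb{F}_q$, and all arithmetic is in $\mathbb{F}_q$. $\Gamma_q$ is the bipartite graph with parts $V_0,V_1$, where for $r\in\{0,1\}$ the set $V_r$ consists of the vertices $(a,b,c)_r$ with $a\in\mathbb{F}_q\cup\{q\}$, $b,c\in\mathbb{F}_q$, together with the vertices $(q,q,a)_r$ with $a\in\mathbb{F}_q\cup\{q\}$. The edges are given by: for $a,b,c\in\mathbb{F}_q$, $N((a,b,c)_1)=\{(x,\,ax+b,\,a^2x+2ab+c)_0: x\in\mathbb{F}_q\}\cup\{(q,a,c)_0\}$; for $b,c\in\mathbb{F}_q$, $N((q,b,c)_1)=\{(c,b,x)_0: x\in\mathbb{F}_q\}\cup\{(q,q,c)_0\}$; for $a\in\mathbb{F}_q\cup\{q\}$, $N((q,q,a)_1)=\{(q,a,x)_0: x\in\mathbb{F}_q\}\cup\{(q,q,q)_0\}$.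 There are no other edges. For a graph $G$, $d_G$ is the distance, $N^t_G[u]=\{x: d_G(u,x)\le t\}$, $N_G[u]=N^1_G[u]$. A set $U\subseteq V(G)$ is a perfect dominating set of $G$ if every vertex $x\in V(G)\setminus U$ has exactly one neighbour in $U$. *)

theory Defs
  imports Main
begin

definition ball_le :: "'v set \<Rightarrow> ('v \<Rightarrow> 'v \<Rightarrow> bool) \<Rightarrow> nat \<Rightarrow> 'v \<Rightarrow> 'v set" where
  "ball_le V E t u = {x \<in> V. \<exists>k\<le>t. (E ^^ k) u x}"

definition perfect_dominating :: "'v set \<Rightarrow> ('v \<Rightarrow> 'v \<Rightarrow> bool) \<Rightarrow> 'v set \<Rightarrow> bool" where
  "perfect_dominating V E U \<longleftrightarrow> U \<subseteq> V \<and> (\<forall>x \<in> V - U. \<exists>!y. y \<in> U \<and> E x y)"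

text \<open>Vertices of Gamma_q: (r, a, b, c) with r = True for side 1, False for side 0;
  coordinates in 'a option, None standing for the formal symbol q.\<close>

type_synonym 'a gvtx = "bool \<times> 'a option \<times> 'a option \<times> 'a option"

definition gamma_V :: "'a gvtx set" where
  "gamma_V = {(r, a, Some b, Some c) | r a b c. True} \<union> {(r, None, None, a) | r a. True}"

definition gamma_N1 :: "'a::field gvtx \<Rightarrow> 'a gvtx set" where
  "gamma_N1 v = (case v of
     (_, Some a, Some b, Some c) \<Rightarrow>
        {(False, Some x, Some (a * x + b), Some (a^2 * x + 2 * a * b + c)) | x. True}
        \<union> {(False, None, Some a, Some c)}
   | (_, None, Some b, Some c) \<Rightarrow>
        {(False, Some c, Some b, Some x) | x. True} \<union> {(False, None, None, Some c)}
   | (_, None, None, a) \<Rightarrow>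
        {(False, None, a, Some x) | x. True} \<union> {(False, None, None, None)}
   | _ \<Rightarrow> {})"

definition gamma_adj :: "'a::field gvtx \<Rightarrow> 'a gvtx \<Rightarrow> bool" where
  "gamma_adj u v \<longleftrightarrow> u \<in> gamma_V \<and> v \<in> gamma_V \<and>
     ((fst u \<and> v \<in> gamma_N1 u) \<or> (fst v \<and> u \<in> gamma_N1 v))"

end

theory Submission
  imports Defs
begin

text \<open>
  The set B of the theorem is described entirely by balls of radius 1 and 2
  around side-1 vertices.  We first reduce such balls to the one-step neighbourhood
  function gamma_N1 (every neighbour of a side-1 vertex lies on side 0, and the vertices
  at distance 2 are the side-1 vertices sharing a neighbour with it).  Computing the four
  kinds of balls occurring in B shows that B equals an explicit set B_explicit, namely
  (with q the formal symbol)
    side 1: (q,0,c), (0,0,z), (q,q,a) for a in F_q or q, and (xi,b,c);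
    side 0: (c,0,x), (q,q,a) for a in F_q or q, (q,0,x) and (q,xi,x).
  Every vertex outside B_explicit falls into one of five shapes, and for each shape we
  exhibit its unique neighbour in B_explicit; this gives perfect domination.  Finally
  B_explicit is a disjoint union of injective images of F_q, F_q x F_q and two singletons,
  whence its cardinality 2(q^2 + 3q + 1).
\<close>

lemma reach_within_Suc:
  "(\<exists>k\<le>Suc t. (E ^^ k) u x) \<longleftrightarrow> x = u \<or> (\<exists>y. E u y \<and> (\<exists>k\<le>t. (E ^^ k) y x))"
proof
  assume "\<exists>k\<le>Suc t. (E ^^ k) u x"
  then obtain k where k: "k \<le> Suc t" "(E ^^ k) u x" by blast
  show "x = u \<or> (\<exists>y. E u y \<and> (\<exists>k\<le>t. (E ^^ k) y x))"
  proof (cases k)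
    case 0
    then show ?thesis using k by simp
  next
    case (Suc j)
    then obtain y where "E u y" "(E ^^ j) y x" using k relpowp_Suc_E2 by metis
    then show ?thesis using k Suc by auto
  qed
next
  assume "x = u \<or> (\<exists>y. E u y \<and> (\<exists>k\<le>t. (E ^^ k) y x))"
  then show "\<exists>k\<le>Suc t. (E ^^ k) u x"
    by (metis Suc_le_mono relpowp_0_I relpowp_Suc_I2 zero_le)
qed

lemma ball_le_1: "ball_le V E 1 u = {x\<in>V. x = u \<or> E u x}"
  unfolding ball_le_def One_nat_def reach_within_Suc by auto

lemma ball_le_2: "ball_le V E 2 u = {x\<in>V. x = u \<or> E u x \<or> (\<exists>y. E u y \<and> E y x)}"
proof -
  have "(\<exists>k\<le>1. (E ^^ k) y x) \<longleftrightarrow> x = y \<or> E y x" for y x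
    using reach_within_Suc[of 0 E y x] by auto
  then show ?thesis
    unfolding ball_le_def numeral_2_eq_2 reach_within_Suc by auto
qed

lemma gamma_V_iff [simp]:
  "(r, a, b, c) \<in> gamma_V \<longleftrightarrow> (b \<noteq> None \<and> c \<noteq> None) \<or> (a = None \<and> b = None)"
  unfolding gamma_V_def by (cases b; cases c) auto

lemma tuple_set_eqI: "(\<And>r a b c. (r, a, b, c) \<in> A \<longleftrightarrow> (r, a, b, c) \<in> B) \<Longrightarrow> A = B"
  by (rule set_eqI) (metis prod_cases4)

lemma gamma_N1_side0: "v \<in> gamma_N1 u \<Longrightarrow> \<not> fst v \<and> v \<in> gamma_V"
  unfolding gamma_N1_def by (cases u) (auto split: option.splits)

lemma gamma_N1_point [simp]:
  "gamma_N1 (r, Some a, Some b, Some c) =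
     {(False, Some x, Some (a * x + b), Some (a^2 * x + 2 * a * b + c)) | x. True}
     \<union> {(False, None, Some a, Some c)}"
  by (simp add: gamma_N1_def)

lemma gamma_N1_line [simp]:
  "gamma_N1 (r, None, Some b, Some c) = {(False, Some c, Some b, Some x) | x. True} \<union> {(False, None, None, Some c)}"
  by (simp add: gamma_N1_def)

lemma gamma_N1_pencil [simp]:
  "gamma_N1 (r, None, None, a) = {(False, None, a, Some x) | x. True} \<union> {(False, None, None, None)}"
  by (simp add: gamma_N1_def)

lemma adj_side1:
  "gamma_adj (True, a, b, c) v \<longleftrightarrow> (True, a, b, c) \<in> gamma_V \<and> v \<in> gamma_N1 (True, a, b, c)"
  unfolding gamma_adj_def using gamma_N1_side0 by fastforce

lemma adj_side0:
  "gamma_adj (False, a, b, c) v \<longleftrightarrow> fst v \<and> v \<in> gamma_V \<and> (False, a, b, c) \<in> gamma_N1 v"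
  unfolding gamma_adj_def using gamma_N1_side0 by fastforce

lemma ball1_side1:
  assumes "(True, a, b, c) \<in> gamma_V"
  shows "ball_le gamma_V gamma_adj 1 (True, a, b, c) = {(True, a, b, c)} \<union> gamma_N1 (True, a, b, c)"
  unfolding ball_le_1 adj_side1 using assms gamma_N1_side0 by blast

lemma ball2_side1:
  assumes "(True, a, b, c) \<in> gamma_V"
  shows "ball_le gamma_V gamma_adj 2 (True, a, b, c) = {(True, a, b, c)} \<union> gamma_N1 (True, a, b, c)
     \<union> {x \<in> gamma_V. fst x \<and> gamma_N1 (True, a, b, c) \<inter> gamma_N1 x \<noteq> {}}"
proof -
  have "gamma_adj y x \<longleftrightarrow> fst x \<and> x \<in> gamma_V \<and> y \<in> gamma_N1 x"
    if y: "y \<in> gamma_N1 (True, a, b, c)" for x y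
  proof -
    obtain p q r where "y = (False, p, q, r)" using gamma_N1_side0[OF y] by (cases y) auto
    then show ?thesis by (simp only: adj_side0)
  qed
  then show ?thesis
    unfolding ball_le_2 adj_side1 using assms gamma_N1_side0 by blast
qed

lemma second_layer_pencil:
  "{x \<in> gamma_V. fst x \<and> gamma_N1 (True, None, None, Some s) \<inter> gamma_N1 x \<noteq> {}}
   = {(True, Some s, Some b, Some c) | b c. True} \<union> {(True, None, None, a) | a. True}"
  (is "?L = ?R")
proof (rule tuple_set_eqI)
  fix r a b c
  show "(r, a, b, c) \<in> ?L \<longleftrightarrow> (r, a, b, c) \<in> ?R" by (cases a; cases b; cases c) auto
qed

lemma second_layer_line:
  "{x \<in> gamma_V. fst x \<and> gamma_N1 (True, None, Some 0, Some s) \<inter> gamma_N1 x \<noteq> {}}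
   = {(True, Some a, Some b, Some z) | a b z. a * s + b = 0}
     \<union> {(True, None, Some b, Some s) | b. True} \<union> {(True, None, None, None)}"
  (is "?L = ?R")
proof (rule tuple_set_eqI)
  fix r a b c
  show "(r, a, b, c) \<in> ?L \<longleftrightarrow> (r, a, b, c) \<in> ?R" by (cases a; cases b; cases c) auto
qed

lemma ball1_q0_union:
  "(\<Union>c. ball_le gamma_V gamma_adj 1 (True, None, Some 0, Some c)) =
     {(True, None, Some 0, Some c) | c. True} \<union> {(False, Some c, Some 0, Some x) | c x. True}
     \<union> {(False, None, None, Some (c::'a::field)) | c. True}"
  by (subst ball1_side1; auto)

lemma ball1_qq0:
  "ball_le gamma_V gamma_adj 1 (True, None, None, Some 0) =
     {(True, None, None, Some 0)} \<union> {(False, None, Some 0, Some x) | x. True}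
     \<union> {(False, None, None, None :: 'a::field option)}"
  by (subst ball1_side1; auto)

lemma ball2_qq:
  "ball_le gamma_V gamma_adj 2 (True, None, None, Some s) =
     {(True, None, None, Some s)} \<union> {(False, None, Some s, Some x) | x. True} \<union> {(False, None, None, None)}
     \<union> {(True, Some s, Some b, Some c) | b c. True} \<union> {(True, None, None, a) | a. True}"
proof -
  have "(True, None, None, Some s) \<in> gamma_V" by simp
  then show ?thesis by (simp only: ball2_side1 second_layer_pencil) auto
qed

lemma ball2_q0:
  "ball_le gamma_V gamma_adj 2 (True, None, Some 0, Some s) =
     {(True, None, Some 0, Some s)} \<union> {(False, Some s, Some 0, Some x) | x. True} \<union> {(False, None, None, Some s)}
     \<union> {(True, Some a, Some b, Some z) | a b z. a * s + b = 0}
     \<union> {(True, None, Some b, Some s) | b. True} \<union> {(True, None, None, None)}"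
proof -
  have "(True, None, Some 0, Some s) \<in> gamma_V" by simp
  then show ?thesis by (simp only: ball2_side1 second_layer_line) auto
qed


lemma core_intersection:
  "(\<Inter>c. ball_le gamma_V gamma_adj 2 (True, None, Some 0, Some c))
     \<inter> ball_le gamma_V gamma_adj 2 (True, None, None, Some 0) =
   {(True, Some 0, Some 0, Some z) | z. True} \<union> {(True, None, None, None :: 'a::field option)}"
proof (intro equalityI subsetI)
  fix x :: "'a gvtx"
  assume "x \<in> (\<Inter>c. ball_le gamma_V gamma_adj 2 (True, None, Some 0, Some c))
     \<inter> ball_le gamma_V gamma_adj 2 (True, None, None, Some 0)"
  then have "x \<in> ball_le gamma_V gamma_adj 2 (True, None, Some 0, Some 0)"
    and "x \<in> ball_le gamma_V gamma_adj 2 (True, None, None, Some 0)" by blast+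
  then show "x \<in> {(True, Some 0, Some 0, Some z) | z. True} \<union> {(True, None, None, None)}"
    unfolding ball2_qq ball2_q0 by auto
next
  fix x :: "'a gvtx"
  assume "x \<in> {(True, Some 0, Some 0, Some z) | z. True} \<union> {(True, None, None, None)}"
  then show "x \<in> (\<Inter>c. ball_le gamma_V gamma_adj 2 (True, None, Some 0, Some c))
     \<inter> ball_le gamma_V gamma_adj 2 (True, None, None, Some 0)"
    unfolding ball2_qq ball2_q0 by auto
qed

definition B_explicit :: "'a::field \<Rightarrow> 'a gvtx set" where
  "B_explicit \<xi> =
     {(True, None, Some 0, Some c) | c. True} \<union> {(True, Some 0, Some 0, Some z) | z. True}
     \<union> {(True, None, None, a) | a. True} \<union> {(True, Some \<xi>, Some b, Some c) | b c. True}
     \<union> {(False, Some c, Some 0, Some x) | c x. True} \<union> {(False, None, None, a) | a. True}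
     \<union> {(False, None, Some 0, Some x) | x. True} \<union> {(False, None, Some \<xi>, Some x) | x. True}"

lemma B_eq_B_explicit:
  "(\<Union>c. ball_le gamma_V gamma_adj 1 (True, None, Some 0, Some c))
    \<union> ball_le gamma_V gamma_adj 1 (True, None, None, Some 0)
    \<union> ((\<Inter>c. ball_le gamma_V gamma_adj 2 (True, None, Some 0, Some c))
         \<inter> ball_le gamma_V gamma_adj 2 (True, None, None, Some 0))
    \<union> ball_le gamma_V gamma_adj 2 (True, None, None, Some \<xi>) = B_explicit \<xi>" (is "?B = _")
proof (rule tuple_set_eqI)
  fix r a b c
  show "(r, a, b, c) \<in> ?B \<longleftrightarrow> (r, a, b, c) \<in> B_explicit \<xi>"
    unfolding core_intersection unfolding ball1_q0_union ball1_qq0 ball2_qq B_explicit_def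
    by (cases a; cases b; cases c; cases r) auto
qed


lemma outside_B_explicit_cases:
  fixes \<xi> :: "'a::field"
  assumes "x \<in> gamma_V - B_explicit \<xi>"
  obtains (side1_infinite_slope) b c where "x = (True, None, Some b, Some c)" "b \<noteq> 0"
  | (side1_slope0) b c where "x = (True, Some 0, Some b, Some c)" "b \<noteq> 0"
  | (side1_other_slope) a b c where "x = (True, Some a, Some b, Some c)" "a \<noteq> 0" "a \<noteq> \<xi>"
  | (side0_infinite) b c where "x = (False, None, Some b, Some c)" "b \<noteq> 0" "b \<noteq> \<xi>"
  | (side0_finite) a b c where "x = (False, Some a, Some b, Some c)" "b \<noteq> 0"
proof -
  obtain r a b c where x: "x = (r, a, b, c)" by (cases x)
  show ?thesis
    using assms that unfolding x B_explicit_def by (cases r; cases a; cases b; cases c) auto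
qed


lemma unique_nbr_side1_infinite_slope:
  assumes "b \<noteq> 0"
  shows "\<exists>!y. y \<in> B_explicit \<xi> \<and> gamma_adj (True, None, Some b, Some c) y"
proof (rule ex1I[of _ "(False, None, None, Some c)"])
  show "(False, None, None, Some c) \<in> B_explicit \<xi> \<and> gamma_adj (True, None, Some b, Some c) (False, None, None, Some c)"
    unfolding adj_side1 B_explicit_def by simp
next
  fix y assume "y \<in> B_explicit \<xi> \<and> gamma_adj (True, None, Some b, Some c) y"
  then show "y = (False, None, None, Some c)"
    using assms unfolding adj_side1 B_explicit_def by auto
qed

lemma unique_nbr_side1_slope0:
  assumes "\<xi> \<noteq> 0" "b \<noteq> 0"
  shows "\<exists>!y. y \<in> B_explicit \<xi> \<and> gamma_adj (True, Some 0, Some b, Some c) y"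
proof (rule ex1I[of _ "(False, None, Some 0, Some c)"])
  show "(False, None, Some 0, Some c) \<in> B_explicit \<xi> \<and> gamma_adj (True, Some 0, Some b, Some c) (False, None, Some 0, Some c)"
    unfolding adj_side1 B_explicit_def by simp
next
  fix y assume "y \<in> B_explicit \<xi> \<and> gamma_adj (True, Some 0, Some b, Some c) y"
  then show "y = (False, None, Some 0, Some c)"
    using assms unfolding adj_side1 B_explicit_def by auto
qed


lemma unique_nbr_side1_other_slope:
  fixes \<xi> a b c :: "'a::field"
  assumes "a \<noteq> 0" "a \<noteq> \<xi>"
  shows "\<exists>!y. y \<in> B_explicit \<xi> \<and> gamma_adj (True, Some a, Some b, Some c) y"
proof -
  have coords: "a * (- b / a) + b = 0" "a^2 * (- b / a) + 2 * a * b + c = a * b + c"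
    using assms(1) by (simp_all add: field_simps power2_eq_square)
  show ?thesis
  proof (rule ex1I[of _ "(False, Some (- b / a), Some 0, Some (a * b + c))"])
    have "(False, Some (- b / a), Some 0, Some (a * b + c))
        = (False, Some (- b / a), Some (a * (- b / a) + b), Some (a^2 * (- b / a) + 2 * a * b + c))"
      by (simp only: coords)
    then have "(False, Some (- b / a), Some 0, Some (a * b + c)) \<in> gamma_N1 (True, Some a, Some b, Some c)"
      unfolding gamma_N1_point by blast
    moreover have "(False, Some (- b / a), Some 0, Some (a * b + c)) \<in> B_explicit \<xi>"
      unfolding B_explicit_def by blast
    ultimately show "(False, Some (- b / a), Some 0, Some (a * b + c)) \<in> B_explicit \<xi>
        \<and> gamma_adj (True, Some a, Some b, Some c) (False, Some (- b / a), Some 0, Some (a * b + c))"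
      by (simp add: adj_side1 del: gamma_N1_point)
  next
    fix y assume "y \<in> B_explicit \<xi> \<and> gamma_adj (True, Some a, Some b, Some c) y"
    then obtain t where t: "y = (False, Some t, Some (a * t + b), Some (a^2 * t + 2 * a * b + c))" "a * t + b = 0"
      using assms unfolding adj_side1 B_explicit_def by auto
    then have "t = - b / a" using assms(1) by (simp add: field_simps eq_neg_iff_add_eq_0 add.commute)
    then show "y = (False, Some (- b / a), Some 0, Some (a * b + c))"
      by (simp only: t(1) coords)
  qed
qed

lemma unique_nbr_side0_infinite:
  assumes "b \<noteq> 0" "b \<noteq> \<xi>"
  shows "\<exists>!y. y \<in> B_explicit \<xi> \<and> gamma_adj (False, None, Some b, Some c) y"
proof (rule ex1I[of _ "(True, None, None, Some b)"])
  show "(True, None, None, Some b) \<in> B_explicit \<xi> \<and> gamma_adj (False, None, Some b, Some c) (True, None, None, Some b)"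
    unfolding adj_side0 B_explicit_def by simp
next
  fix y assume "y \<in> B_explicit \<xi> \<and> gamma_adj (False, None, Some b, Some c) y"
  then show "y = (True, None, None, Some b)"
    using assms unfolding adj_side0 B_explicit_def by auto
qed

text \<open>The side-0 vertex (a,b,c) with b nonzero sees only its unique neighbour of first
  coordinate xi.\<close>
lemma unique_nbr_side0_finite:
  fixes \<xi> a b c :: "'a::field"
  assumes "\<xi> \<noteq> 0" "b \<noteq> 0"
  defines "b' \<equiv> b - \<xi> * a"
  defines "y0 \<equiv> (True, Some \<xi>, Some b', Some (c - \<xi>^2 * a - 2 * \<xi> * b'))"
  shows "\<exists>!y. y \<in> B_explicit \<xi> \<and> gamma_adj (False, Some a, Some b, Some c) y"
proof (rule ex1I[of _ y0])
  have "b = \<xi> * a + b'" "c = \<xi>^2 * a + 2 * \<xi> * b' + (c - \<xi>^2 * a - 2 * \<xi> * b')"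
    unfolding b'_def by simp_all
  then have "(False, Some a, Some b, Some c) \<in> gamma_N1 y0"
    unfolding y0_def gamma_N1_point by blast
  then show "y0 \<in> B_explicit \<xi> \<and> gamma_adj (False, Some a, Some b, Some c) y0"
    unfolding adj_side0 by (simp add: y0_def B_explicit_def)
next
  fix y assume "y \<in> B_explicit \<xi> \<and> gamma_adj (False, Some a, Some b, Some c) y"
  then show "y = y0"
    using assms unfolding adj_side0 B_explicit_def by auto
qed

lemma B_explicit_perfect_dominating:
  fixes \<xi> :: "'a::field"
  assumes "\<xi> \<noteq> 0"
  shows "perfect_dominating gamma_V gamma_adj (B_explicit \<xi>)"
  unfolding perfect_dominating_def
proof (intro conjI ballI)
  show "B_explicit \<xi> \<subseteq> gamma_V" unfolding B_explicit_def by auto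
next
  fix x assume "x \<in> gamma_V - B_explicit \<xi>"
  then show "\<exists>!y. y \<in> B_explicit \<xi> \<and> gamma_adj x y"
  proof (cases rule: outside_B_explicit_cases)
    case side1_infinite_slope
    then show ?thesis by (simp add: unique_nbr_side1_infinite_slope)
  next
    case side1_slope0
    then show ?thesis using assms by (simp add: unique_nbr_side1_slope0)
  next
    case side1_other_slope
    then show ?thesis by (simp add: unique_nbr_side1_other_slope)
  next
    case side0_infinite
    then show ?thesis by (simp add: unique_nbr_side0_infinite)
  next
    case side0_finite
    then show ?thesis using assms by (simp add: unique_nbr_side0_finite)
  qed
qed

lemma B_explicit_as_images:
  fixes \<xi> :: "'a::field"
  assumes "\<xi> \<noteq> 0"
  shows "B_explicit \<xi> =
      range (\<lambda>c. (True, None, Some 0, Some c)) \<union> range (\<lambda>z. (True, Some 0, Some 0, Some z))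
    \<union> range (\<lambda>a. (True, None, None, Some a)) \<union> {(True, None, None, None)}
    \<union> (\<lambda>(b, c). (True, Some \<xi>, Some b, Some c)) ` UNIV \<union> (\<lambda>(c, x). (False, Some c, Some 0, Some x)) ` UNIV
    \<union> range (\<lambda>c. (False, None, None, Some c)) \<union> {(False, None, None, None)}
    \<union> range (\<lambda>x. (False, None, Some 0, Some x)) \<union> range (\<lambda>x. (False, None, Some \<xi>, Some x))"
    (is "_ = ?images")
proof (rule tuple_set_eqI)
  fix r a b c
  show "(r, a, b, c) \<in> B_explicit \<xi> \<longleftrightarrow> (r, a, b, c) \<in> ?images"
    unfolding B_explicit_def by (cases a; cases b; cases c; cases r) auto
qed

text \<open>Counting: q + q + (q+1) + q^2 on side 1 and q^2 + (q+1) + q + q on side 0.\<close>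
lemma card_B_explicit:
  fixes \<xi> :: "'a::{finite, field}"
  assumes "\<xi> \<noteq> 0"
  shows "card (B_explicit \<xi>) = 2 * (card (UNIV :: 'a set)^2 + 3 * card (UNIV :: 'a set) + 1)"
proof -
  have card_line: "card (range f) = card (UNIV :: 'a set)" if "inj f" for f :: "'a \<Rightarrow> 'a gvtx"
    using that by (simp add: card_image)
  have card_plane: "card (f ` UNIV) = card (UNIV :: 'a set)^2" if "inj f" for f :: "'a \<times> 'a \<Rightarrow> 'a gvtx"
    using that by (simp add: card_image card_cartesian_product power2_eq_square flip: UNIV_Times_UNIV)
  show ?thesis
    unfolding B_explicit_as_images[OF assms] using assms
    apply (subst card_Un_disjoint, simp, simp, fastforce)+
    apply (subst card_line card_plane, simp add: inj_def)+
    apply simp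
    done
qed

theorem theorem2:
  fixes \<xi> :: "'a::{finite, field}"
  assumes "\<xi> \<noteq> 0"
  defines "B \<equiv>
      (\<Union>c. ball_le gamma_V gamma_adj 1 (True, None, Some 0, Some c))
    \<union> ball_le gamma_V gamma_adj 1 (True, None, None, Some 0)
    \<union> ((\<Inter>c. ball_le gamma_V gamma_adj 2 (True, None, Some 0, Some c))
         \<inter> ball_le gamma_V gamma_adj 2 (True, None, None, Some 0))
    \<union> ball_le gamma_V gamma_adj 2 (True, None, None, Some \<xi>)"
  shows "perfect_dominating gamma_V gamma_adj B
         \<and> card B = 2 * (card (UNIV :: 'a set)^2 + 3 * card (UNIV :: 'a set) + 1)"
proof -
  have "B = B_explicit \<xi>" unfolding B_def by (rule B_eq_B_explicit)
  then show ?thesis using B_explicit_perfect_dominating[OF assms(1)] card_B_explicit[OF assms(1)] by simp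
qed

end
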